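(* Let $a\in\mathit{Act}$ and let $m$ be a closed monitor. (1) If $m$ is $\mathit{no}$-free then $\mathcal{E}_v\vdash\mathit{yes}+a.m=\mathit{yes}$. (2) If $m$ contains occurrences of both $\mathit{yes}$ and $\mathit{no}$, then $\mathcal{E}_v\vdash\mathit{yes}+a.m=\mathit{yes}+a.n$ for some $\mathit{yes}$-free closed monitor $n$. (3) If $m$ is $\mathit{yes}$-free then $\mathcal{E}_v\vdash\mathit{no}+a.m=\mathit{no}$. (4) If $m$ contains occurrences of both $\mathit{yes}$ and $\mathit{no}$, then $\mathcal{E}_v\vdash\mathit{no}+a.m=\mathit{no}+a.n$ for some $\mathit{no}$-free closed monitor $n$.
   Context: Monitors: terms $m,n ::= v \mid a.m \mid m+n \mid x$ over a nonempty action set $\mathit{Act}$ and variables $x$, verdicts $v::=\mathit{end}\mid\mathit{yes}\mid\mathit{no}$; closed monitors contain no variables. A monitor is $v$-free if it contains no occurrence of the verdict $v$. $\mathcal{E}\vdash m=n$ denotes derivability by the rules of equational logic (reflexivity, symmetry, transitivity, substitution, congruence for $a.\_$ and $+$). $\mathcal{E}_v$ consists of (A1) $x+y=y+x$; (A2) $x+(y+z)=(x+y)+z$; (A3) $x+x=x$; (A4) $x+\mathit{end}=x$; and, for each $a\in\mathit{Act}$, ($E_a$) $a.\mathit{end}=\mathit{end}$; ($Y_a$) $\mathit{yes}=\mathit{yes}+a.\mathit{yes}$; ($N_a$) $\mathit{no}=\mathit{no}+a.\mathit{no}$; ($D_a$) $a.(x+y)=a.x+a.y$. *)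

theory Defs
  imports Main
begin

datatype verdict = End | Yes | No

datatype 'act mon =
    Verd verdict
  | Pre 'act "'act mon"
  | Sum "'act mon" "'act mon"
  | Var nat

fun vars :: "'act mon \<Rightarrow> nat set" where
  "vars (Verd v) = {}"
| "vars (Pre a m) = vars m"
| "vars (Sum m n) = vars m \<union> vars n"
| "vars (Var x) = {x}"

definition closed :: "'act mon \<Rightarrow> bool" where
  "closed m \<longleftrightarrow> vars m = {}"

fun verdicts :: "'act mon \<Rightarrow> verdict set" where
  "verdicts (Verd v) = {v}"
| "verdicts (Pre a m) = verdicts m"
| "verdicts (Sum m n) = verdicts m \<union> verdicts n"
| "verdicts (Var x) = {}"

definition vfree :: "verdict \<Rightarrow> 'act mon \<Rightarrow> bool" where
  "vfree v m \<longleftrightarrow> v \<notin> verdicts m"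

fun subst :: "(nat \<Rightarrow> 'act mon) \<Rightarrow> 'act mon \<Rightarrow> 'act mon" where
  "subst \<sigma> (Verd v) = Verd v"
| "subst \<sigma> (Pre a m) = Pre a (subst \<sigma> m)"
| "subst \<sigma> (Sum m n) = Sum (subst \<sigma> m) (subst \<sigma> n)"
| "subst \<sigma> (Var x) = \<sigma> x"

text \<open>The axioms of E_v (variables x = Var 0, y = Var 1, z = Var 2).\<close>
inductive Ev_ax :: "'act mon \<Rightarrow> 'act mon \<Rightarrow> bool" where
  A1: "Ev_ax (Sum (Var 0) (Var 1)) (Sum (Var 1) (Var 0))"
| A2: "Ev_ax (Sum (Var 0) (Sum (Var 1) (Var 2))) (Sum (Sum (Var 0) (Var 1)) (Var 2))"
| A3: "Ev_ax (Sum (Var 0) (Var 0)) (Var 0)"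
| A4: "Ev_ax (Sum (Var 0) (Verd End)) (Var 0)"
| Ea: "Ev_ax (Pre a (Verd End)) (Verd End)"
| Ya: "Ev_ax (Verd Yes) (Sum (Verd Yes) (Pre a (Verd Yes)))"
| Na: "Ev_ax (Verd No) (Sum (Verd No) (Pre a (Verd No)))"
| Da: "Ev_ax (Pre a (Sum (Var 0) (Var 1))) (Sum (Pre a (Var 0)) (Pre a (Var 1)))"

inductive Ev_eq :: "'act mon \<Rightarrow> 'act mon \<Rightarrow> bool" where
  ax: "Ev_ax m n \<Longrightarrow> Ev_eq m n"
| refl: "Ev_eq m m"
| sym: "Ev_eq m n \<Longrightarrow> Ev_eq n m"
| trans: "Ev_eq m n \<Longrightarrow> Ev_eq n k \<Longrightarrow> Ev_eq m k"
| subst: "Ev_eq m n \<Longrightarrow> Ev_eq (subst \<sigma> m) (subst \<sigma> n)"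
| pre: "Ev_eq m n \<Longrightarrow> Ev_eq (Pre a m) (Pre a n)"
| sum: "Ev_eq m1 n1 \<Longrightarrow> Ev_eq m2 n2 \<Longrightarrow> Ev_eq (Sum m1 m2) (Sum n1 n2)"

end

theory Submission
  imports Defs
begin

text \<open>A definite verdict \<open>v\<close> (\<open>yes\<close> or \<open>no\<close>) absorbs copies of itself under a prefix:
  by \<open>Y\<^sub>a\<close>/\<open>N\<^sub>a\<close> and \<open>D\<^sub>a\<close>, \<open>v + a.m = v + a.(v + m)\<close>. Distributing prefixes over sums and
  inducting on \<open>m\<close>, every occurrence of \<open>v\<close> below the prefix can therefore be erased,
  i.e. replaced by \<open>end\<close>, which disappears by \<open>E\<^sub>a\<close> and \<open>A4\<close>. If \<open>m\<close> has no verdict other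
  than \<open>v\<close> and \<open>end\<close>, this makes the whole summand \<open>a.m\<close> vanish.\<close>

declare Ev_eq.trans [trans]

lemma Ev_eq_axiom_instance: "Ev_ax l r \<Longrightarrow> Ev_eq (subst \<sigma> l) (subst \<sigma> r)"
  by (rule Ev_eq.subst[OF Ev_eq.ax])

lemma Ev_sum_commute: "Ev_eq (Sum x y) (Sum y x)"
  using Ev_eq_axiom_instance[OF Ev_ax.A1, of "\<lambda>i. if i = 0 then x else y"] by simp

lemma Ev_sum_assoc: "Ev_eq (Sum x (Sum y z)) (Sum (Sum x y) z)"
  using Ev_eq_axiom_instance[OF Ev_ax.A2, of "\<lambda>i. if i = 0 then x else if i = 1 then y else z"]
  by simp

lemma Ev_sum_End: "Ev_eq (Sum x (Verd End)) x"
  using Ev_eq_axiom_instance[OF Ev_ax.A4, of "\<lambda>_. x"] by simp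

lemma Ev_pre_End: "Ev_eq (Pre a (Verd End)) (Verd End)"
  by (rule Ev_eq.ax[OF Ev_ax.Ea])

lemma Ev_pre_distrib: "Ev_eq (Pre a (Sum x y)) (Sum (Pre a x) (Pre a y))"
  using Ev_eq_axiom_instance[OF Ev_ax.Da, of "\<lambda>i. if i = 0 then x else y"] by simp

lemma Ev_verdict_unfold: "v \<noteq> End \<Longrightarrow> Ev_eq (Verd v) (Sum (Verd v) (Pre a (Verd v)))"
  using Ev_eq.ax[OF Ev_ax.Ya] Ev_eq.ax[OF Ev_ax.Na] by (cases v) auto

lemma Ev_sum_cong_left: "Ev_eq x x' \<Longrightarrow> Ev_eq (Sum x y) (Sum x' y)"
  by (rule Ev_eq.sum[OF _ Ev_eq.refl])

lemma Ev_sum_cong_right: "Ev_eq y y' \<Longrightarrow> Ev_eq (Sum x y) (Sum x y')"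
  by (rule Ev_eq.sum[OF Ev_eq.refl])

lemma Ev_sum_cong_in_context:
  assumes "Ev_eq (Sum x y) (Sum x y')" and "Ev_eq (Sum x z) (Sum x z')"
  shows "Ev_eq (Sum x (Sum y z)) (Sum x (Sum y' z'))"
proof -
  have "Ev_eq (Sum x (Sum y z)) (Sum (Sum x y) z)" by (rule Ev_sum_assoc)
  also have "Ev_eq \<dots> (Sum (Sum x y') z)" using assms(1) by (rule Ev_sum_cong_left)
  also have "Ev_eq \<dots> (Sum x (Sum y' z))" by (rule Ev_eq.sym[OF Ev_sum_assoc])
  also have "Ev_eq \<dots> (Sum x (Sum z y'))" by (rule Ev_sum_cong_right[OF Ev_sum_commute])
  also have "Ev_eq \<dots> (Sum (Sum x z) y')" by (rule Ev_sum_assoc)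
  also have "Ev_eq \<dots> (Sum (Sum x z') y')" using assms(2) by (rule Ev_sum_cong_left)
  also have "Ev_eq \<dots> (Sum x (Sum z' y'))" by (rule Ev_eq.sym[OF Ev_sum_assoc])
  also have "Ev_eq \<dots> (Sum x (Sum y' z'))" by (rule Ev_sum_cong_right[OF Ev_sum_commute])
  finally show ?thesis .
qed

lemma Ev_verdict_absorb_under_pre:
  assumes "v \<noteq> End"
  shows "Ev_eq (Sum (Verd v) (Pre a x)) (Sum (Verd v) (Pre a (Sum (Verd v) x)))"
proof -
  have "Ev_eq (Sum (Verd v) (Pre a (Sum (Verd v) x)))
      (Sum (Verd v) (Sum (Pre a (Verd v)) (Pre a x)))"
    by (rule Ev_sum_cong_right[OF Ev_pre_distrib])
  also have "Ev_eq \<dots> (Sum (Sum (Verd v) (Pre a (Verd v))) (Pre a x))" by (rule Ev_sum_assoc)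
  also have "Ev_eq \<dots> (Sum (Verd v) (Pre a x))"
    by (rule Ev_sum_cong_left[OF Ev_eq.sym[OF Ev_verdict_unfold[OF assms]]])
  finally show ?thesis by (rule Ev_eq.sym)
qed

lemma Ev_verdict_absorbs_pre:
  assumes "closed m" and "verdicts m \<subseteq> {v, End}" and "v \<noteq> End"
  shows "Ev_eq (Sum (Verd v) (Pre a m)) (Verd v)"
  using assms
proof (induction m arbitrary: a)
  case (Verd u)
  then consider "u = v" | "u = End" by auto
  then show ?case
  proof cases
    case 1
    then show ?thesis using Ev_eq.sym[OF Ev_verdict_unfold[OF \<open>v \<noteq> End\<close>]] by simp
  next
    case 2
    have "Ev_eq (Sum (Verd v) (Pre a (Verd End))) (Sum (Verd v) (Verd End))"
      by (rule Ev_sum_cong_right[OF Ev_pre_End])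
    also have "Ev_eq \<dots> (Verd v)" by (rule Ev_sum_End)
    finally show ?thesis using 2 by simp
  qed
next
  case (Pre b m)
  have "Ev_eq (Sum (Verd v) (Pre a (Pre b m))) (Sum (Verd v) (Pre a (Sum (Verd v) (Pre b m))))"
    by (rule Ev_verdict_absorb_under_pre[OF \<open>v \<noteq> End\<close>])
  also have "Ev_eq \<dots> (Sum (Verd v) (Pre a (Verd v)))"
    using Pre by (intro Ev_sum_cong_right Ev_eq.pre) (auto simp: closed_def)
  also have "Ev_eq \<dots> (Verd v)" by (rule Ev_eq.sym[OF Ev_verdict_unfold[OF \<open>v \<noteq> End\<close>]])
  finally show ?case .
next
  case (Sum m1 m2)
  have "Ev_eq (Sum (Verd v) (Pre a (Sum m1 m2))) (Sum (Verd v) (Sum (Pre a m1) (Pre a m2)))"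
    by (rule Ev_sum_cong_right[OF Ev_pre_distrib])
  also have "Ev_eq \<dots> (Sum (Sum (Verd v) (Pre a m1)) (Pre a m2))" by (rule Ev_sum_assoc)
  also have "Ev_eq \<dots> (Sum (Verd v) (Pre a m2))"
    using Sum by (intro Ev_sum_cong_left) (auto simp: closed_def)
  also have "Ev_eq \<dots> (Verd v)" using Sum by (auto simp: closed_def)
  finally show ?case .
next
  case (Var x)
  then show ?case by (simp add: closed_def)
qed

lemma Ev_verdict_erase_under_pre:
  assumes "v \<noteq> End"
  shows "\<exists>n. vars n \<subseteq> vars m \<and> vfree v n \<and>
    Ev_eq (Sum (Verd v) (Pre a m)) (Sum (Verd v) (Pre a n))"
proof (induction m arbitrary: a)
  case (Verd u)
  show ?case
  proof (cases "u = v")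
    case True
    have "Ev_eq (Sum (Verd v) (Pre a (Verd v))) (Verd v)"
      by (rule Ev_eq.sym[OF Ev_verdict_unfold[OF assms]])
    also have "Ev_eq \<dots> (Sum (Verd v) (Verd End))" by (rule Ev_eq.sym[OF Ev_sum_End])
    also have "Ev_eq \<dots> (Sum (Verd v) (Pre a (Verd End)))"
      by (rule Ev_sum_cong_right[OF Ev_eq.sym[OF Ev_pre_End]])
    finally show ?thesis
      using True assms by (intro exI[of _ "Verd End"]) (auto simp: vfree_def)
  next
    case False
    then show ?thesis by (intro exI[of _ "Verd u"]) (auto simp: vfree_def intro: Ev_eq.refl)
  qed
next
  case (Pre b m)
  then obtain n where n: "vars n \<subseteq> vars m" "vfree v n"
    and eq: "Ev_eq (Sum (Verd v) (Pre b m)) (Sum (Verd v) (Pre b n))"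
    by blast
  have "Ev_eq (Sum (Verd v) (Pre a (Pre b m))) (Sum (Verd v) (Pre a (Sum (Verd v) (Pre b m))))"
    by (rule Ev_verdict_absorb_under_pre[OF assms])
  also have "Ev_eq \<dots> (Sum (Verd v) (Pre a (Sum (Verd v) (Pre b n))))"
    using eq by (rule Ev_sum_cong_right[OF Ev_eq.pre])
  also have "Ev_eq \<dots> (Sum (Verd v) (Pre a (Pre b n)))"
    by (rule Ev_eq.sym[OF Ev_verdict_absorb_under_pre[OF assms]])
  finally show ?case
    using n by (intro exI[of _ "Pre b n"]) (auto simp: vfree_def)
next
  case (Sum m1 m2)
  then obtain n1 n2 where n: "vars n1 \<subseteq> vars m1" "vfree v n1" "vars n2 \<subseteq> vars m2" "vfree v n2"
    and eq1: "Ev_eq (Sum (Verd v) (Pre a m1)) (Sum (Verd v) (Pre a n1))"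
    and eq2: "Ev_eq (Sum (Verd v) (Pre a m2)) (Sum (Verd v) (Pre a n2))"
    by meson
  have "Ev_eq (Sum (Verd v) (Pre a (Sum m1 m2))) (Sum (Verd v) (Sum (Pre a m1) (Pre a m2)))"
    by (rule Ev_sum_cong_right[OF Ev_pre_distrib])
  also have "Ev_eq \<dots> (Sum (Verd v) (Sum (Pre a n1) (Pre a n2)))"
    using eq1 eq2 by (rule Ev_sum_cong_in_context)
  also have "Ev_eq \<dots> (Sum (Verd v) (Pre a (Sum n1 n2)))"
    by (rule Ev_sum_cong_right[OF Ev_eq.sym[OF Ev_pre_distrib]])
  finally show ?case
    using n by (intro exI[of _ "Sum n1 n2"]) (auto simp: vfree_def)
next
  case (Var x)
  show ?case by (intro exI[of _ "Var x"]) (auto simp: vfree_def intro: Ev_eq.refl)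
qed


theorem mainTheorem5:
  fixes a :: 'act and m :: "'act mon"
  assumes "closed m"
  shows "(vfree No m \<longrightarrow> Ev_eq (Sum (Verd Yes) (Pre a m)) (Verd Yes))
    \<and> (Yes \<in> verdicts m \<and> No \<in> verdicts m \<longrightarrow>
         (\<exists>n. closed n \<and> vfree Yes n \<and>
              Ev_eq (Sum (Verd Yes) (Pre a m)) (Sum (Verd Yes) (Pre a n))))
    \<and> (vfree Yes m \<longrightarrow> Ev_eq (Sum (Verd No) (Pre a m)) (Verd No))
    \<and> (Yes \<in> verdicts m \<and> No \<in> verdicts m \<longrightarrow>
         (\<exists>n. closed n \<and> vfree No n \<and>
              Ev_eq (Sum (Verd No) (Pre a m)) (Sum (Verd No) (Pre a n))))"
proof -
  have verdicts_cases: "verdicts m \<subseteq> {Yes, No, End}"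
    using verdict.exhaust by blast
  have erase: "\<exists>n. closed n \<and> vfree v n \<and> Ev_eq (Sum (Verd v) (Pre a m)) (Sum (Verd v) (Pre a n))"
    if "v \<noteq> End" for v
    using Ev_verdict_erase_under_pre[OF that, of m a] assms by (auto simp: closed_def)
  show ?thesis
    using Ev_verdict_absorbs_pre[OF assms, of Yes a] Ev_verdict_absorbs_pre[OF assms, of No a]
      erase[of Yes] erase[of No] verdicts_cases
    unfolding vfree_def by blast
qed

end
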